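(* Let $\mathcal{T}$ satisfy the standing assumptions and let $\overline{F}$ be its tail function. (a) The following are equivalent: (i) $\mathcal{T}^{\mathcal{R}}\leq_{\mathrm{st}}\mathcal{T}$ for all reset laws $\mathcal{R}$; (ii) $\mathcal{T}^{\delta_r}\leq_{\mathrm{st}}\mathcal{T}$ for all $r\in(0,\infty)$; (iii) $\overline{F}$ is supermultiplicative, i.e. $\overline{F}(x+y)\geq \overline{F}(x)\overline{F}(y)$ for all $x,y\in[0,\infty)$ (equivalently, $-\log\overline{F}:[0,\infty)\to[0,\infty]$ is subadditive; equivalently, for all $r,t\in[0,\infty)$ one has $\mathcal{T}((r,\infty])>0$ and $\mathcal{T}(\{s: s-r>t\}\mid (r,\infty])\geq \mathcal{T}((t,\infty])$); (iv) $\mathcal{T}_{\mathcal{R}}\leq_{\mathrm{st}}\mathcal{T}$ for all reset laws $\mathcal{R}$; (v) $\mathcal{T}_{\delta_r}\leq_{\mathrm{st}}\mathcal{T}$ for all $r\in(0,\infty)$. (b) The following are equivalent: (i) $\mathcal{T}^{\mathcal{R}}\geq_{\mathrm{st}}\mathcal{T}$ for all reset laws $\mathcal{R}$; (ii) $\mathcal{T}^{\delta_r}\geq_{\mathrm{st}}\mathcal{T}$ for all $r\in(0,\infty)$; (iii) $\overline{F}$ is submultiplicative, i.e. $\overline{F}(x+y)\leq \overline{F}(x)\overline{F}(y)$ for all $x,y\in[0,\infty)$ (equivalently $-\log\overline{F}$ is superadditive); (iv) $\mathcal{T}_{\mathcal{R}}\geq_{\mathrm{st}}\mathcal{T}$ for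 all reset laws $\mathcal{R}$; (v) $\mathcal{T}_{\delta_r}\geq_{\mathrm{st}}\mathcal{T}$ for all $r\in(0,\infty)$. (c) The following are equivalent: (i) $\mathcal{T}^{\mathcal{R}}=\mathcal{T}$ for all reset laws $\mathcal{R}$; (ii) $\mathcal{T}^{\delta_r}=\mathcal{T}$ for all $r\in(0,\infty)$; (iii) $\overline{F}$ is multiplicative, i.e. $\overline{F}(x+y)=\overline{F}(x)\overline{F}(y)$ for all $x,y\in[0,\infty)$; (iv) $\mathcal{T}_{\mathcal{R}}=\mathcal{T}$ for all reset laws $\mathcal{R}$; (v) $\mathcal{T}_{\delta_r}=\mathcal{T}$ for all $r\in(0,\infty)$. Furthermore, $\overline{F}$ is multiplicative if and only if $\mathcal{T}=\mathrm{Exp}(\lambda)$ for some $\lambda\in(0,\infty)$.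
   Context: Standing assumptions: $\mathcal{T}$ is a probability law on the Borel sets of $[0,\infty]$ with $\mathcal{T}((0,\infty])>0$ and $\inf\mathrm{supp}(\mathcal{T})=0$. Its tail function is $\overline{F}(t):=\mathcal{T}((t,\infty])$ for $t\in[0,\infty)$, with the convention $\overline{F}(\infty):=0$; $\log 0:=-\infty$. A reset law is a probability law $\mathcal{R}$ on the Borel sets of $[0,\infty]$ with $\mathcal{R}((0,\infty])>0$ and $\mathcal{R}([0,\infty))>0$. Given a reset law $\mathcal{R}$: let $(T_k)_{k\in\mathbb{N}}$ be i.i.d. with law $\mathcal{T}$ and $(R_k)_{k\in\mathbb{N}}$ an independent i.i.d. sequence with law $\mathcal{R}$ (all $[0,\infty]$-valued); $\mathcal{T}^{\mathcal{R}}$ is the law of the random time $\tilde T$ defined a.s. by $\tilde T=R_1+\cdots+R_{k-1}+T_k$ on $\{R_1<T_1,\ldots,R_{k-1}<T_{k-1},T_k\leq R_k\}$, $k\in\mathbb{N}$. Further, $\mathcal{T}_{\mathcal{R}}$ is the law of $T_1\mathbf{1}_{\{T_1\leq R\}}+(R+T_2)\mathbf{1}_{\{R<T_1\}}$, where $(T_1,T_2)$ has law $\mathcal{T}\times\mathcal{T}$ and $R$ is independent with law $\mathcal{R}$. For laws $\mathcal{A},\mathcal{B}$ on $[0,\infty]$, $\mathcal{A}\leq_{\mathrm{st}}\mathcal{B}$ (equivalently $\mathcal{B}\geq_{\mathrm{st}}\mathcal{A}$) means $\mathcal{A}((t,\infty])\leq\mathcal{B}((t,\infty])$ for all $t\in[0,\infty)$.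 $\delta_r$ is the Dirac mass at $r$, $\mathrm{Exp}(\lambda)$ the exponential law with mean $\lambda^{-1}$. *)

theory Defs
  imports "HOL-Probability.Probability"
begin

text \<open>Laws on [0,\<infinity>] are measures on the type ennreal with its Borel sets.\<close>

definition base_law :: "ennreal measure \<Rightarrow> bool" where
  "base_law T \<longleftrightarrow> prob_space T \<and> sets T = sets borel \<and> emeasure T {0<..} > 0 \<and>
     (\<forall>e::ennreal. e > 0 \<longrightarrow> emeasure T {..<e} > 0)"
  (* the last conjunct says 0 belongs to the (closed) support, i.e. inf supp T = 0 *)

definition reset_law :: "ennreal measure \<Rightarrow> bool" where
  "reset_law R \<longleftrightarrow> prob_space R \<and> sets R = sets borel \<and> emeasure R {0<..} > 0 \<and>
     emeasure R {..<\<infinity>} > 0"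

definition tail :: "ennreal measure \<Rightarrow> real \<Rightarrow> real" where
  "tail T t = measure T {ennreal t<..}"

definition neglog_tail :: "ennreal measure \<Rightarrow> real \<Rightarrow> ereal" where
  "neglog_tail T t = (if tail T t = 0 then \<infinity> else ereal (- ln (tail T t)))"

definition stoch_le :: "ennreal measure \<Rightarrow> ennreal measure \<Rightarrow> bool" where
  "stoch_le A B \<longleftrightarrow> (\<forall>t::real. t \<ge> 0 \<longrightarrow> measure A {ennreal t<..} \<le> measure B {ennreal t<..})"

text \<open>omega i = (T_(i+1), R_(i+1)); stopping at index k (0-based).\<close>
definition reset_stop :: "(nat \<Rightarrow> ennreal \<times> ennreal) \<Rightarrow> nat \<Rightarrow> bool" where
  "reset_stop \<omega> k \<longleftrightarrow> (\<forall>i<k. snd (\<omega> i) < fst (\<omega> i)) \<and> fst (\<omega> k) \<le> snd (\<omega> k)"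

definition reset_time :: "(nat \<Rightarrow> ennreal \<times> ennreal) \<Rightarrow> ennreal" where
  "reset_time \<omega> = (if \<exists>k. reset_stop \<omega> k
     then (let k = (LEAST k. reset_stop \<omega> k) in (\<Sum>i<k. snd (\<omega> i)) + fst (\<omega> k))
     else \<infinity>)"

text \<open>The law T^R (restart with i.i.d. resets), and T_R (a single reset).\<close>
definition reset_full :: "ennreal measure \<Rightarrow> ennreal measure \<Rightarrow> ennreal measure" where
  "reset_full T R = distr (PiM UNIV (\<lambda>_::nat. T \<Otimes>\<^sub>M R)) borel reset_time"

definition reset_once :: "ennreal measure \<Rightarrow> ennreal measure \<Rightarrow> ennreal measure" where
  "reset_once T R = distr (T \<Otimes>\<^sub>M (T \<Otimes>\<^sub>M R)) borel
     (\<lambda>(t1, t2, r). if t1 \<le> r then t1 else r + t2)"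

definition dirac_law :: "real \<Rightarrow> ennreal measure" where
  "dirac_law r = return borel (ennreal r)"

definition Exp_law :: "real \<Rightarrow> ennreal measure" where
  "Exp_law l = distr (density lborel (exponential_density l)) borel ennreal"

end

theory Submission
  imports Defs
begin

text \<open>Conditioning on the first attempt \<open>(T\<^sub>1, R\<^sub>1)\<close> yields a renewal equation for
  \<open>T\<^sup>R\<close>: on \<open>{T\<^sub>1 \<le> R\<^sub>1}\<close> the time is \<open>T\<^sub>1\<close>, on \<open>{R\<^sub>1 < T\<^sub>1}\<close> it is \<open>R\<^sub>1\<close> plus a fresh copy
  of \<open>T\<^sup>R\<close>. The single-reset law \<open>T\<^sub>R\<close> satisfies the same equation with the fresh copy
  replaced by \<open>T\<close>. Hence any uniform slack between the tails of \<open>T\<^sup>R\<close> and \<open>T\<close> is reproduced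
  multiplied by \<open>q = P(R\<^sub>1 < T\<^sub>1)\<close>, and \<open>q < 1\<close> because \<open>0\<close> lies in the support of \<open>T\<close>;
  so \<open>T\<^sup>R\<close> compares with \<open>T\<close> as soon as \<open>T\<^sub>R\<close> does.

  Given \<open>R\<^sub>1 = r\<close>, the tail of \<open>T\<^sub>R\<close> at \<open>t \<ge> r\<close> is \<open>F(r) F(t - r)\<close>, so \<open>T\<^sub>R \<le> T\<close> for all \<open>R\<close>
  follows from supermultiplicativity of the tail \<open>F\<close>, and \<open>T\<^sub>\<delta>\<^sub>r \<le> T\<close> for all \<open>r\<close> is equivalent
  to it. For \<open>T\<^sup>\<delta>\<^sup>r\<close> the same product formula holds only at times \<open>r + u\<close> with \<open>u < r\<close>;
  right-continuity of \<open>F\<close> removes this restriction. The submultiplicative case is symmetric.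
  Finally, a multiplicative tail makes \<open>-log F\<close> additive and monotone, hence linear, so \<open>T\<close> is
  exponential.\<close>

definition supermultiplicative :: "(real \<Rightarrow> real) \<Rightarrow> bool" where
  "supermultiplicative f \<longleftrightarrow> (\<forall>x y. x \<ge> 0 \<longrightarrow> y \<ge> 0 \<longrightarrow> f (x + y) \<ge> f x * f y)"

definition submultiplicative :: "(real \<Rightarrow> real) \<Rightarrow> bool" where
  "submultiplicative f \<longleftrightarrow> (\<forall>x y. x \<ge> 0 \<longrightarrow> y \<ge> 0 \<longrightarrow> f (x + y) \<le> f x * f y)"

definition multiplicative :: "(real \<Rightarrow> real) \<Rightarrow> bool" where
  "multiplicative f \<longleftrightarrow> (\<forall>x y. x \<ge> 0 \<longrightarrow> y \<ge> 0 \<longrightarrow> f (x + y) = f x * f y)"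

lemma multiplicative_iff: "multiplicative f \<longleftrightarrow> supermultiplicative f \<and> submultiplicative f"
proof -
  have "f (x + y) = f x * f y \<longleftrightarrow> f x * f y \<le> f (x + y) \<and> f (x + y) \<le> f x * f y" for x y
    by auto
  then show ?thesis
    unfolding multiplicative_def supermultiplicative_def submultiplicative_def by blast
qed

lemma supermultiplicativeI_ordered:
  assumes "\<And>x y. 0 \<le> x \<Longrightarrow> x \<le> y \<Longrightarrow> f x * f y \<le> f (x + y)"
  shows "supermultiplicative f"
  unfolding supermultiplicative_def by (metis assms add.commute mult.commute nle_le)

lemma submultiplicativeI_ordered:
  assumes "\<And>x y. 0 \<le> x \<Longrightarrow> x \<le> y \<Longrightarrow> f (x + y) \<le> f x * f y"
  shows "submultiplicative f"
  unfolding submultiplicative_def by (metis assms add.commute mult.commute nle_le)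

section \<open>Tails and stochastic order\<close>

lemma space_eq_UNIV_if_sets_borel:
  "sets M = sets (borel :: 'a::topological_space measure) \<Longrightarrow> space M = UNIV"
  using sets_eq_imp_space_eq by fastforce

lemma tail_nonneg: "0 \<le> tail T t"
  by (simp add: tail_def)

lemma tail_le_1: "prob_space T \<Longrightarrow> tail T t \<le> 1"
  by (simp add: tail_def prob_space.prob_le_1)

lemma emeasure_Ioi_eq_tail: "prob_space T \<Longrightarrow> emeasure T {ennreal t<..} = ennreal (tail T t)"
  by (simp add: tail_def finite_measure.emeasure_eq_measure[OF prob_space.finite_measure])

lemma tail_antimono:
  assumes "prob_space T" "sets T = sets borel" "0 \<le> x" "x \<le> y"
  shows "tail T y \<le> tail T x"
  unfolding tail_def using assms
  by (intro finite_measure.finite_measure_mono[OF prob_space.finite_measure])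
     (auto simp: ennreal_leI intro: order_le_less_trans)

lemma greaterThan_ennreal_eq_UN:
  assumes "0 \<le> x"
  shows "{ennreal x<..} = (\<Union>n. {ennreal (x + inverse (real (Suc n)))<..})"
proof (intro set_eqI iffI)
  fix y assume "y \<in> (\<Union>n. {ennreal (x + inverse (real (Suc n)))<..})"
  then obtain n where "ennreal (x + inverse (real (Suc n))) < y" by auto
  moreover have "ennreal x \<le> ennreal (x + inverse (real (Suc n)))" by (intro ennreal_leI) simp
  ultimately show "y \<in> {ennreal x<..}" by simp
next
  fix y assume y: "y \<in> {ennreal x<..}"
  show "y \<in> (\<Union>n. {ennreal (x + inverse (real (Suc n)))<..})"
  proof (cases y rule: ennreal_cases)
    case (real z)
    with y assms have "0 < z - x" by (simp add: ennreal_less_iff)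
    then obtain n where "inverse (real (Suc n)) < z - x"
      using reals_Archimedean by blast
    then have "ennreal (x + inverse (real (Suc n))) < y"
      using real assms by (simp add: ennreal_less_iff del: ennreal_plus)
    then show ?thesis by auto
  qed (auto intro!: exI[of _ 0])
qed

lemma tail_le_if_right_approx:
  assumes T: "prob_space T" "sets T = sets borel" and x: "0 \<le> x"
    and b: "\<And>n::nat. tail T (x + inverse (real (Suc n))) \<le> b"
  shows "tail T x \<le> b"
proof -
  let ?A = "\<lambda>n::nat. {ennreal (x + inverse (real (Suc n)))<..}"
  have "incseq ?A"
  proof (rule incseq_SucI)
    fix n :: nat
    have "ennreal (x + inverse (real (Suc (Suc n)))) \<le> ennreal (x + inverse (real (Suc n)))"
      by (intro ennreal_leI) (simp add: field_simps)
    then show "?A n \<subseteq> ?A (Suc n)" by auto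
  qed
  then have "emeasure T {ennreal x<..} = (SUP n. emeasure T (?A n))"
    unfolding greaterThan_ennreal_eq_UN[OF x] by (intro SUP_emeasure_incseq[symmetric]) (auto simp: T)
  also have "\<dots> \<le> ennreal b"
    by (rule SUP_least) (use b emeasure_Ioi_eq_tail[OF T(1)] in \<open>auto simp: ennreal_leI\<close>)
  finally have "ennreal (tail T x) \<le> ennreal b" using emeasure_Ioi_eq_tail[OF T(1)] by simp
  moreover have "0 \<le> b" using b[of 0] tail_nonneg[of T] by (rule order_trans[rotated])
  ultimately show ?thesis by simp
qed

lemma stoch_le_iff_emeasure:
  assumes "prob_space A" "prob_space B"
  shows "stoch_le A B \<longleftrightarrow> (\<forall>t\<ge>0. emeasure A {ennreal t<..} \<le> emeasure B {ennreal t<..})"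
  using assms by (simp add: stoch_le_def emeasure_Ioi_eq_tail tail_def)

lemma stoch_le_refl: "stoch_le A A"
  by (simp add: stoch_le_def)

lemma measure_eqI_tail:
  assumes A: "prob_space A" "sets A = sets (borel :: ennreal measure)"
    and B: "prob_space B" "sets B = sets (borel :: ennreal measure)"
    and eq: "\<And>t. 0 \<le> t \<Longrightarrow> tail A t = tail B t"
  shows "A = B"
proof -
  let ?E = "insert UNIV (range greaterThan) :: ennreal set set"
  have "sigma_sets UNIV ?E = sigma_sets UNIV (range greaterThan)"
    by (intro antisym sigma_sets_mono sigma_sets_mono')
       (auto intro: sigma_sets_top sigma_sets.Basic)
  then have borel_eq: "sets (borel :: ennreal measure) = sigma_sets UNIV ?E"
    by (simp add: borel_Ioi)
  have total: "emeasure A UNIV = 1" "emeasure B UNIV = 1"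
    using prob_space.emeasure_space_1[OF A(1)] prob_space.emeasure_space_1[OF B(1)]
      space_eq_UNIV_if_sets_borel[OF A(2)] space_eq_UNIV_if_sets_borel[OF B(2)] by simp_all
  have emeasure_eq: "emeasure A X = emeasure B X" if X: "X \<in> ?E" for X
  proof -
    consider "X = UNIV" | a :: ennreal where "X = {a<..}" using X by blast
    then show ?thesis
    proof cases
      case 1
      then show ?thesis using total by simp
    next
      case (2 a)
      show ?thesis
      proof (cases a rule: ennreal_cases)
        case (real t)
        then show ?thesis using 2 eq[of t] by (simp add: emeasure_Ioi_eq_tail A(1) B(1))
      qed (use 2 in \<open>auto simp: greaterThan_def\<close>)
    qed
  qed
  have "Int_stable ?E"
  proof (rule Int_stableI)
    have "{a<..} \<inter> {b<..} = {max a b<..}" for a b :: ennreal by auto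
    then show "X \<inter> Y \<in> ?E" if "X \<in> ?E" "Y \<in> ?E" for X Y using that by auto
  qed
  then show ?thesis
    by (rule measure_eqI_generator_eq[where \<Omega>=UNIV and A="\<lambda>_. UNIV"])
       (use A B borel_eq emeasure_eq total in auto)
qed

lemma stoch_le_antisym:
  assumes "prob_space A" "sets A = sets borel" "prob_space B" "sets B = sets borel"
    and "stoch_le A B" "stoch_le B A"
  shows "A = B"
  by (rule measure_eqI_tail[OF assms(1-4)])
     (use assms(5,6) in \<open>auto simp: stoch_le_def tail_def intro: antisym\<close>)

section \<open>The renewal equation\<close>

lemma measurable_reset_stop[measurable]:
  assumes [measurable]: "fst \<in> borel_measurable M" "snd \<in> borel_measurable M"
  shows "Measurable.pred (PiM UNIV (\<lambda>_::nat. M)) (\<lambda>\<omega>. reset_stop \<omega> k)"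
  unfolding reset_stop_def by measurable

lemma borel_measurable_reset_time:
  assumes [measurable]: "fst \<in> borel_measurable M" "snd \<in> borel_measurable M"
  shows "reset_time \<in> borel_measurable (PiM UNIV (\<lambda>_::nat. M))"
proof -
  let ?S = "PiM UNIV (\<lambda>_::nat. M)"
  have "(\<lambda>\<omega>. (\<Sum>i<k. snd (\<omega> i)) + fst (\<omega> k)) \<in> borel_measurable ?S" for k
    by measurable
  moreover have "(\<lambda>\<omega>. LEAST k. reset_stop \<omega> k) \<in> ?S \<rightarrow>\<^sub>M count_space UNIV"
    by measurable
  ultimately have "(\<lambda>\<omega>. (\<Sum>i<(LEAST k. reset_stop \<omega> k). snd (\<omega> i))
      + fst (\<omega> (LEAST k. reset_stop \<omega> k))) \<in> borel_measurable ?S"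
    by (rule measurable_compose_countable)
  moreover have "{\<omega> \<in> space ?S. \<exists>k. reset_stop \<omega> k} \<in> sets ?S"
    by measurable
  ultimately have "(\<lambda>\<omega>. if \<exists>k. reset_stop \<omega> k then (\<Sum>i<(LEAST k. reset_stop \<omega> k). snd (\<omega> i))
      + fst (\<omega> (LEAST k. reset_stop \<omega> k)) else \<infinity>) \<in> borel_measurable ?S"
    by (intro measurable_If) auto
  moreover have "reset_time = (\<lambda>\<omega>. if \<exists>k. reset_stop \<omega> k then (\<Sum>i<(LEAST k. reset_stop \<omega> k). snd (\<omega> i))
      + fst (\<omega> (LEAST k. reset_stop \<omega> k)) else \<infinity>)"
    by (rule ext) (simp add: reset_time_def Let_def)
  ultimately show ?thesis
    by simp
qed

lemma reset_stop_case_nat_0: "reset_stop (case_nat s \<omega>) 0 \<longleftrightarrow> fst s \<le> snd s"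
  by (simp add: reset_stop_def)

lemma reset_stop_case_nat_Suc:
  "reset_stop (case_nat s \<omega>) (Suc k) \<longleftrightarrow> snd s < fst s \<and> reset_stop \<omega> k"
  by (auto simp add: reset_stop_def less_Suc_eq_0_disj)

lemma reset_time_case_nat:
  "reset_time (case_nat s \<omega>) = (if fst s \<le> snd s then fst s else snd s + reset_time \<omega>)"
proof (cases "fst s \<le> snd s")
  case True
  then have "reset_stop (case_nat s \<omega>) 0" by (simp add: reset_stop_case_nat_0)
  moreover from this have "(LEAST k. reset_stop (case_nat s \<omega>) k) = 0" by simp
  ultimately show ?thesis using True by (auto simp: reset_time_def)
next
  case False
  then have not_0: "\<not> reset_stop (case_nat s \<omega>) 0" by (simp add: reset_stop_case_nat_0)
  have stop_Suc: "reset_stop (case_nat s \<omega>) (Suc k) \<longleftrightarrow> reset_stop \<omega> k" for k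
    using False by (simp add: reset_stop_case_nat_Suc not_le)
  have ex_iff: "(\<exists>k. reset_stop (case_nat s \<omega>) k) \<longleftrightarrow> (\<exists>k. reset_stop \<omega> k)"
    using not_0 stop_Suc by (metis not0_implies_Suc)
  show ?thesis
  proof (cases "\<exists>k. reset_stop \<omega> k")
    case True
    then obtain k where k: "reset_stop (case_nat s \<omega>) (Suc k)" using stop_Suc by blast
    have "(LEAST k. reset_stop (case_nat s \<omega>) k) = Suc (LEAST k. reset_stop \<omega> k)"
      using Least_Suc[of "reset_stop (case_nat s \<omega>)", OF k not_0] stop_Suc by simp
    then show ?thesis using True ex_iff False unfolding reset_time_def Let_def
      by (simp add: sum.lessThan_Suc_shift ac_simps del: sum.lessThan_Suc)
  next
    case False
    then show ?thesis using ex_iff \<open>\<not> fst s \<le> snd s\<close> by (simp add: reset_time_def)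
  qed
qed

text \<open>The probability of \<open>A\<close> given the first attempt \<open>s = (T\<^sub>1, R\<^sub>1)\<close>, when after a reset
  the remaining time has law \<open>H\<close>.\<close>

definition first_step :: "ennreal measure \<Rightarrow> ennreal set \<Rightarrow> ennreal \<times> ennreal \<Rightarrow> ennreal" where
  "first_step H A s =
     (if fst s \<le> snd s then indicator A (fst s) else emeasure H {x. snd s + x \<in> A})"

lemma borel_measurable_emeasure_shift:
  assumes "prob_space H" "sets H = sets borel" "A \<in> sets borel"
  shows "(\<lambda>r::ennreal. emeasure H {x. r + x \<in> A}) \<in> borel_measurable borel"
proof -
  interpret H: prob_space H by fact
  have [measurable_cong]: "sets H = sets borel" and [measurable]: "A \<in> sets borel" by fact+
  have "{p \<in> space (borel \<Otimes>\<^sub>M H). fst p + snd p \<in> A} \<in> sets (borel \<Otimes>\<^sub>M H)" by measurable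
  then have "{p::ennreal \<times> ennreal. fst p + snd p \<in> A} \<in> sets (borel \<Otimes>\<^sub>M H)"
    by (simp add: space_pair_measure space_eq_UNIV_if_sets_borel[OF assms(2)])
  from H.measurable_emeasure_Pair[OF this] show ?thesis by (simp add: vimage_def)
qed

lemma shift_vimage_in_borel: "A \<in> sets borel \<Longrightarrow> {x::ennreal. r + x \<in> A} \<in> sets borel"
proof -
  assume [measurable]: "A \<in> sets borel"
  have "(\<lambda>x::ennreal. r + x) -` A \<inter> space borel \<in> sets borel" by measurable
  then show ?thesis by (simp add: vimage_def)
qed

locale reset_pair =
  fixes T R :: "ennreal measure"
  assumes prob_T: "prob_space T" and sets_T: "sets T = sets borel"
    and prob_R: "prob_space R" and sets_R: "sets R = sets borel"
begin

abbreviation "M \<equiv> T \<Otimes>\<^sub>M R"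
abbreviation "S \<equiv> PiM UNIV (\<lambda>_::nat. M)"

lemma prob_space_M: "prob_space M"
  using prob_T prob_R by (rule prob_space_pair)

sublocale SQ: sequence_space M
  using prob_space_M
  by (auto simp: sequence_space_def product_prob_space_def product_prob_space_axioms_def
      product_sigma_finite_def prob_space_imp_sigma_finite)

lemma space_M: "space M = UNIV"
  by (simp add: space_pair_measure space_eq_UNIV_if_sets_borel sets_T sets_R)

lemma measurable_fst_M[measurable]: "fst \<in> borel_measurable M"
  and measurable_snd_M[measurable]: "snd \<in> borel_measurable M"
  using measurable_fst[of T R] measurable_snd[of T R]
  by (simp_all add: measurable_cong_sets[OF refl sets_T] measurable_cong_sets[OF refl sets_R])

lemma measurable_reset_time_S[measurable]: "reset_time \<in> borel_measurable S"
  by (rule borel_measurable_reset_time) measurable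

lemma prob_space_reset_full: "prob_space (reset_full T R)"
  and sets_reset_full: "sets (reset_full T R) = sets borel"
  unfolding reset_full_def by (auto intro!: SQ.prob_space_distr)

lemma measurable_reset_once_map:
  "(\<lambda>(t1, t2, r). if t1 \<le> r then t1 else r + t2) \<in> borel_measurable (T \<Otimes>\<^sub>M (T \<Otimes>\<^sub>M R))"
proof -
  have [measurable_cong]: "sets T = sets borel" "sets R = sets borel" using sets_T sets_R by auto
  show ?thesis by measurable
qed

lemma prob_space_reset_once: "prob_space (reset_once T R)"
  and sets_reset_once: "sets (reset_once T R) = sets borel"
proof -
  interpret TM: prob_space "T \<Otimes>\<^sub>M M" by (rule prob_space_pair[OF prob_T prob_space_M])
  show "prob_space (reset_once T R)"
    unfolding reset_once_def by (rule TM.prob_space_distr[OF measurable_reset_once_map])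
  show "sets (reset_once T R) = sets borel" unfolding reset_once_def by simp
qed

lemma borel_measurable_first_step:
  assumes "prob_space H" "sets H = sets borel" "A \<in> sets borel"
  shows "first_step H A \<in> borel_measurable M"
proof -
  note borel_measurable_emeasure_shift[OF assms, measurable]
  have [measurable]: "A \<in> sets borel" by fact
  show ?thesis unfolding first_step_def[abs_def] by measurable
qed

text \<open>Since \<open>S\<close> is the law of \<open>case_nat (T\<^sub>1, R\<^sub>1) \<omega>\<close> with \<omega> an independent copy of the whole
  sequence, \<open>reset_time_case_nat\<close> turns into a fixed-point equation for \<open>T\<^sup>R\<close>.\<close>

lemma emeasure_reset_full_renewal:
  assumes A: "A \<in> sets borel"
  shows "emeasure (reset_full T R) A = (\<integral>\<^sup>+ s. first_step (reset_full T R) A s \<partial>M)"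
proof -
  let ?G = "reset_full T R"
  let ?f = "\<lambda>(s, \<omega>). case_nat s \<omega>"
  let ?X = "reset_time -` A \<inter> space S"
  have f: "?f \<in> M \<Otimes>\<^sub>M S \<rightarrow>\<^sub>M S" by measurable
  have X: "?X \<in> sets S" using A by measurable
  have G_eq: "emeasure ?G B = emeasure S (reset_time -` B \<inter> space S)" if "B \<in> sets borel" for B
    unfolding reset_full_def using that by (simp add: emeasure_distr)
  have "emeasure ?G A = emeasure (distr (M \<Otimes>\<^sub>M S) S ?f) ?X"
    using G_eq[OF A] SQ.PiM_iter by simp
  also have "\<dots> = emeasure (M \<Otimes>\<^sub>M S) (?f -` ?X \<inter> space (M \<Otimes>\<^sub>M S))"
    by (rule emeasure_distr[OF f X])
  also have "\<dots> = (\<integral>\<^sup>+ s. emeasure S (Pair s -` (?f -` ?X \<inter> space (M \<Otimes>\<^sub>M S))) \<partial>M)"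
    by (rule SQ.emeasure_pair_measure_alt) (use f X in measurable)
  also have "\<dots> = (\<integral>\<^sup>+ s. first_step ?G A s \<partial>M)"
  proof (rule nn_integral_cong)
    fix s assume s: "s \<in> space M"
    have "Pair s -` (?f -` ?X \<inter> space (M \<Otimes>\<^sub>M S)) =
       {\<omega> \<in> space S. (if fst s \<le> snd s then fst s else snd s + reset_time \<omega>) \<in> A}"
      using s f[THEN measurable_space] by (auto simp: space_pair_measure reset_time_case_nat)
    moreover have "emeasure ?G {x. snd s + x \<in> A} = emeasure S {\<omega> \<in> space S. snd s + reset_time \<omega> \<in> A}"
      using G_eq[OF shift_vimage_in_borel[OF A]] by (simp add: vimage_def Int_def conj_commute)
    ultimately show "emeasure S (Pair s -` (?f -` ?X \<inter> space (M \<Otimes>\<^sub>M S))) = first_step ?G A s"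
      by (cases "fst s \<in> A") (simp_all add: first_step_def SQ.P.emeasure_space_1)
  qed
  finally show ?thesis .
qed

lemma emeasure_reset_once_first_step:
  assumes A: "A \<in> sets borel"
  shows "emeasure (reset_once T R) A = (\<integral>\<^sup>+ s. first_step T A s \<partial>M)"
proof -
  interpret T: prob_space T by (rule prob_T)
  interpret R: prob_space R by (rule prob_R)
  interpret P2: pair_sigma_finite T R by unfold_locales
  let ?g = "\<lambda>(t1, t2, r). if t1 \<le> r then t1 else r + t2"
  have [measurable]: "A \<in> sets borel" by fact
  note measurable_reset_once_map[measurable]
  have [measurable_cong]: "sets T = sets borel" "sets R = sets borel" using sets_T sets_R by auto
  have inner: "(\<integral>\<^sup>+ t2. indicator A (?g (t1, t2, r)) \<partial>T) = first_step T A (t1, r)" for t1 r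
  proof (cases "t1 \<le> r")
    case False
    then have "(\<integral>\<^sup>+ t2. indicator A (?g (t1, t2, r)) \<partial>T) = (\<integral>\<^sup>+ t2. indicator {x. r + x \<in> A} t2 \<partial>T)"
      by (intro nn_integral_cong) (simp add: indicator_def)
    then show ?thesis
      using False shift_vimage_in_borel[OF A, of r] by (simp add: first_step_def sets_T)
  qed (simp add: first_step_def T.emeasure_space_1)
  have "emeasure (reset_once T R) A = (\<integral>\<^sup>+ \<omega>. indicator A (?g \<omega>) \<partial>(T \<Otimes>\<^sub>M M))"
    unfolding reset_once_def using A
    by (simp add: emeasure_distr nn_integral_indicator[symmetric] nn_integral_distr
        measurable_reset_once_map del: nn_integral_indicator)
  also have "\<dots> = (\<integral>\<^sup>+ t1. (\<integral>\<^sup>+ p. indicator A (?g (t1, p)) \<partial>M) \<partial>T)"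
    by (rule sigma_finite_measure.nn_integral_fst[OF prob_space_imp_sigma_finite[OF prob_space_M], symmetric])
       measurable
  also have "\<dots> = (\<integral>\<^sup>+ t1. (\<integral>\<^sup>+ r. (\<integral>\<^sup>+ t2. indicator A (?g (t1, t2, r)) \<partial>T) \<partial>R) \<partial>T)"
    by (intro nn_integral_cong P2.nn_integral_snd[symmetric]) (simp add: split_beta')
  also have "\<dots> = (\<integral>\<^sup>+ t1. (\<integral>\<^sup>+ r. first_step T A (t1, r) \<partial>R) \<partial>T)"
    by (simp only: inner)
  also have "\<dots> = (\<integral>\<^sup>+ s. first_step T A s \<partial>M)"
    by (rule sigma_finite_measure.nn_integral_fst[OF prob_space_imp_sigma_finite[OF prob_R]])
       (rule borel_measurable_first_step[OF prob_T sets_T A])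
  finally show ?thesis .
qed

end

lemma shift_greaterThan_eq:
  assumes "r \<le> ennreal t" "0 \<le> t"
  shows "{x. ennreal t < r + x} = {ennreal (t - enn2real r)<..}"
proof -
  obtain \<rho> where r: "r = ennreal \<rho>" "0 \<le> \<rho>" "\<rho> \<le> t"
    using assms by (cases r rule: ennreal_cases) (auto simp: ennreal_le_iff top_unique)
  have "ennreal t < ennreal \<rho> + x \<longleftrightarrow> ennreal (t - \<rho>) < x" for x
    using r by (cases x rule: ennreal_cases)
      (auto simp: ennreal_plus[symmetric] ennreal_less_iff simp del: ennreal_plus)
  then show ?thesis using r by auto
qed

lemma emeasure_shifted_tail:
  assumes H: "prob_space H" "sets H = sets borel" and t: "0 \<le> t"
  shows "emeasure H {x. ennreal t < r + x} =
    (if ennreal t < r then 1 else ennreal (tail H (t - enn2real r)))"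
proof (cases "ennreal t < r")
  case True
  then have "{x. ennreal t < r + x} = space H"
    by (auto simp: space_eq_UNIV_if_sets_borel[OF H(2)] intro: order_less_le_trans[OF _ add_increasing2])
  then show ?thesis using True prob_space.emeasure_space_1[OF H(1)] by simp
next
  case False
  then show ?thesis
    using shift_greaterThan_eq[of r t] t by (simp add: emeasure_Ioi_eq_tail[OF H(1)])
qed

lemma first_step_tail_le_slack:
  assumes H1: "prob_space H1" "sets H1 = sets borel" and H2: "prob_space H2" "sets H2 = sets borel"
    and t: "0 \<le> t"
    and slack: "\<And>u. 0 \<le> u \<Longrightarrow> emeasure H1 {ennreal u<..} \<le> emeasure H2 {ennreal u<..} + d"
  shows "first_step H1 {ennreal t<..} s \<le> first_step H2 {ennreal t<..} s + d * indicator {s. snd s < fst s} s"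
proof (cases "fst s \<le> snd s \<or> ennreal t < snd s")
  case True
  then show ?thesis by (auto simp: first_step_def emeasure_shifted_tail[OF H1 t] emeasure_shifted_tail[OF H2 t])
next
  case False
  then have reset_first: "\<not> fst s \<le> snd s" "snd s < fst s" and "snd s \<le> ennreal t" by auto
  then have "enn2real (snd s) \<le> t" using enn2real_mono[of "snd s" "ennreal t"] t by simp
  then have "ennreal (tail H1 (t - enn2real (snd s))) \<le> ennreal (tail H2 (t - enn2real (snd s))) + d"
    using slack[of "t - enn2real (snd s)"] by (simp add: emeasure_Ioi_eq_tail H1(1) H2(1))
  then show ?thesis
    using False reset_first by (simp add: first_step_def emeasure_shifted_tail[OF H1 t] emeasure_shifted_tail[OF H2 t])
qed

lemma nn_integral_first_step_fixed_reset:
  assumes T: "prob_space T" "sets T = sets borel" and H: "prob_space H" "sets H = sets borel"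
    and t: "0 \<le> t"
  shows "(\<integral>\<^sup>+ t1. first_step H {ennreal t<..} (t1, r) \<partial>T) =
    (if ennreal t < r then ennreal (tail T t) else ennreal (tail T (enn2real r) * tail H (t - enn2real r)))"
proof -
  let ?c = "emeasure H {x. ennreal t < r + x}"
  have "(\<integral>\<^sup>+ t1. first_step H {ennreal t<..} (t1, r) \<partial>T) =
     (\<integral>\<^sup>+ t1. indicator {ennreal t<..r} t1 + ?c * indicator {r<..} t1 \<partial>T)"
    by (intro nn_integral_cong) (auto simp: first_step_def indicator_def)
  also have "\<dots> = emeasure T {ennreal t<..r} + ?c * emeasure T {r<..}"
  proof -
    have measurable_T: "borel_measurable T = borel_measurable borel"
      by (rule measurable_cong_sets[OF T(2) refl])
    have "(\<integral>\<^sup>+ t1. indicator {ennreal t<..r} t1 + ?c * indicator {r<..} t1 \<partial>T)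
        = (\<integral>\<^sup>+ t1. indicator {ennreal t<..r} t1 \<partial>T) + (\<integral>\<^sup>+ t1. ?c * indicator {r<..} t1 \<partial>T)"
      by (rule nn_integral_add) (unfold measurable_T, measurable)
    then show ?thesis by (simp add: T(2) nn_integral_cmult_indicator)
  qed
  also have "\<dots> = (if ennreal t < r then ennreal (tail T t)
      else ennreal (tail T (enn2real r) * tail H (t - enn2real r)))"
  proof (cases "ennreal t < r")
    case True
    have "emeasure T {ennreal t<..r} + emeasure T {r<..} = emeasure T ({ennreal t<..r} \<union> {r<..})"
      by (rule plus_emeasure) (auto simp: T(2))
    also have "{ennreal t<..r} \<union> {r<..} = {ennreal t<..}" using True by auto
    finally show ?thesis using True by (simp add: emeasure_shifted_tail[OF H t] emeasure_Ioi_eq_tail[OF T(1)])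
  next
    case False
    then have "r = ennreal (enn2real r)" using ennreal_enn2real_if by (auto simp: top_unique)
    then have "emeasure T {r<..} = ennreal (tail T (enn2real r))"
      by (metis emeasure_Ioi_eq_tail[OF T(1)])
    moreover have "{ennreal t<..r} = {}" using False by auto
    ultimately show ?thesis
      using False by (simp add: emeasure_shifted_tail[OF H t] ennreal_mult' tail_nonneg mult.commute)
  qed
  finally show ?thesis .
qed

section \<open>Comparison of one and infinitely many resets\<close>

text \<open>The least uniform slack \<open>D\<close> satisfies \<open>D \<le> D * q\<close> and is finite, hence vanishes.\<close>

lemma le_if_slack_contracts:
  fixes a b :: "real \<Rightarrow> ennreal" and q :: ennreal
  assumes a_le_1: "\<And>u. 0 \<le> u \<Longrightarrow> a u \<le> 1" and q: "q < 1"
    and contract: "\<And>d u. (\<And>u. 0 \<le> u \<Longrightarrow> a u \<le> b u + d) \<Longrightarrow> 0 \<le> u \<Longrightarrow> a u \<le> b u + d * q"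
    and u: "0 \<le> u"
  shows "a u \<le> b u"
proof -
  define D where "D = (SUP u\<in>{0..}. a u - b u)"
  have slack: "a u \<le> b u + D" if "0 \<le> u" for u
  proof -
    have "a u - b u \<le> D" unfolding D_def using that by (intro SUP_upper) auto
    then show ?thesis by (metis add.commute add_left_mono diff_add_self_ennreal linear order_trans)
  qed
  have gap: "a u - b u \<le> D * q" if "0 \<le> u" for u
  proof -
    have "a u \<noteq> \<top>" using a_le_1[OF that] by (metis ennreal_one_neq_top top_unique)
    then show ?thesis using contract[OF slack that] by (simp add: ennreal_minus_le_iff add.commute)
  qed
  have "D \<le> D * q" unfolding D_def by (rule SUP_least) (use gap D_def in auto)
  moreover have "D \<le> 1" unfolding D_def
    by (rule SUP_least) (metis a_le_1 atLeast_iff diff_le_self_ennreal order_trans)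
  moreover from \<open>D \<le> 1\<close> have "D < \<top>" using order_le_less_trans ennreal_one_less_top by blast
  ultimately have "D = 0" using q
    by (metis ennreal_mult_strict_left_mono less_le more_arith_simps(6) not_less zero_order(3))
  then have "a u - b u \<le> 0" using gap[OF u] by simp
  moreover have "a u < \<top>" using a_le_1[OF u] order_le_less_trans ennreal_one_less_top by blast
  ultimately show ?thesis using diff_eq_0_iff_ennreal le_zero_eq by blast
qed

lemma emeasure_atLeast_pos_if_greaterThan_0_pos:
  fixes R :: "ennreal measure"
  assumes R: "sets R = sets borel" "0 < emeasure R {0<..}"
  shows "\<exists>e>0. 0 < emeasure R {e..}"
proof (rule ccontr)
  assume none: "\<not> ?thesis"
  have null: "emeasure R {ennreal (inverse (real (Suc n)))..} = 0" for n
  proof -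
    have "0 < ennreal (inverse (real (Suc n)))" by simp
    with none show ?thesis by (meson not_gr_zero)
  qed
  have "emeasure R {ennreal (0 + inverse (real (Suc n)))<..} = 0" for n
  proof -
    have "emeasure R {ennreal (0 + inverse (real (Suc n)))<..} \<le> emeasure R {ennreal (inverse (real (Suc n)))..}"
      by (intro emeasure_mono) (auto simp: R(1))
    then show ?thesis using null[of n] by simp
  qed
  then have "emeasure R {ennreal 0<..} = 0"
    unfolding greaterThan_ennreal_eq_UN[OF order_refl] by (intro emeasure_UN_eq_0) (auto simp: R(1))
  then show False using R(2) by simp
qed

context reset_pair
begin

lemma emeasure_reset_first_less_1:
  assumes "base_law T" "reset_law R"
  shows "emeasure M {s. snd s < fst s} < 1"
proof -
  interpret R: prob_space R by (rule prob_R)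
  obtain e where e: "0 < e" "0 < emeasure R {e..}"
    using emeasure_atLeast_pos_if_greaterThan_0_pos[OF sets_R] assms(2) by (auto simp: reset_law_def)
  have "0 < emeasure T {..<e}" using assms(1) e(1) by (simp add: base_law_def)
  have done_in_M: "{s. fst s \<le> snd s} \<in> sets M"
  proof -
    have "{s \<in> space M. fst s \<le> snd s} \<in> sets M" by measurable
    then show ?thesis by (simp add: space_M)
  qed
  have "0 < emeasure T {..<e} * emeasure R {e..}"
    using \<open>0 < emeasure T {..<e}\<close> e(2) by (simp add: ennreal_zero_less_mult_iff)
  also have "\<dots> = emeasure M ({..<e} \<times> {e..})"
    by (rule R.emeasure_pair_measure_Times[symmetric]) (auto simp: sets_T sets_R)
  also have "\<dots> \<le> emeasure M {s. fst s \<le> snd s}"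
    by (rule emeasure_mono[OF _ done_in_M]) auto
  finally have pos: "0 < emeasure M {s. fst s \<le> snd s}" .
  have "{s. snd s < fst s} = space M - {s. fst s \<le> snd s}" by (auto simp: space_M)
  then have "emeasure M {s. snd s < fst s} = 1 - emeasure M {s. fst s \<le> snd s}"
    using emeasure_compl[OF done_in_M] prob_space.emeasure_space_1[OF prob_space_M] by simp
  moreover have "emeasure M {s. fst s \<le> snd s} \<le> 1" by (rule prob_space.emeasure_le_1[OF prob_space_M])
  ultimately show ?thesis using pos by (simp add: ennreal_between)
qed

lemma nn_integral_first_step_tail_le:
  assumes H1: "prob_space H1" "sets H1 = sets borel" and H2: "prob_space H2" "sets H2 = sets borel"
    and t: "0 \<le> t"
    and slack: "\<And>u. 0 \<le> u \<Longrightarrow> emeasure H1 {ennreal u<..} \<le> emeasure H2 {ennreal u<..} + d"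
  shows "(\<integral>\<^sup>+ s. first_step H1 {ennreal t<..} s \<partial>M)
    \<le> (\<integral>\<^sup>+ s. first_step H2 {ennreal t<..} s \<partial>M) + d * emeasure M {s. snd s < fst s}"
proof -
  have reset_first: "{s. snd s < fst s} \<in> sets M"
  proof -
    have "{s \<in> space M. snd s < fst s} \<in> sets M" by measurable
    then show ?thesis by (simp add: space_M)
  qed
  have "(\<integral>\<^sup>+ s. first_step H1 {ennreal t<..} s \<partial>M)
      \<le> (\<integral>\<^sup>+ s. first_step H2 {ennreal t<..} s + d * indicator {s. snd s < fst s} s \<partial>M)"
    by (intro nn_integral_mono first_step_tail_le_slack[OF H1 H2 t slack])
  also have "\<dots> = (\<integral>\<^sup>+ s. first_step H2 {ennreal t<..} s \<partial>M) + d * emeasure M {s. snd s < fst s}"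
    using borel_measurable_first_step[OF H2] reset_first
    by (subst nn_integral_add) (auto simp: nn_integral_cmult_indicator)
  finally show ?thesis .
qed

lemma reset_full_tail_le_if_reset_once:
  assumes q: "emeasure M {s. snd s < fst s} < 1"
    and once: "\<And>t. 0 \<le> t \<Longrightarrow> emeasure (reset_once T R) {ennreal t<..} \<le> emeasure T {ennreal t<..}"
    and t: "0 \<le> t"
  shows "emeasure (reset_full T R) {ennreal t<..} \<le> emeasure T {ennreal t<..}"
proof (rule le_if_slack_contracts[OF _ q _ t])
  fix d and u :: real
  assume slack: "\<And>u. 0 \<le> u \<Longrightarrow> emeasure (reset_full T R) {ennreal u<..} \<le> emeasure T {ennreal u<..} + d"
    and u: "0 \<le> u"
  have "emeasure (reset_full T R) {ennreal u<..} = (\<integral>\<^sup>+ s. first_step (reset_full T R) {ennreal u<..} s \<partial>M)"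
    by (simp add: emeasure_reset_full_renewal)
  also have "\<dots> \<le> (\<integral>\<^sup>+ s. first_step T {ennreal u<..} s \<partial>M) + d * emeasure M {s. snd s < fst s}"
    by (rule nn_integral_first_step_tail_le[OF prob_space_reset_full sets_reset_full prob_T sets_T u slack])
  also have "(\<integral>\<^sup>+ s. first_step T {ennreal u<..} s \<partial>M) = emeasure (reset_once T R) {ennreal u<..}"
    by (simp add: emeasure_reset_once_first_step)
  finally show "emeasure (reset_full T R) {ennreal u<..} \<le> emeasure T {ennreal u<..} + d * emeasure M {s. snd s < fst s}"
    using once[OF u] by (meson add_right_mono order_trans)
qed (rule prob_space.emeasure_le_1[OF prob_space_reset_full])

lemma reset_full_tail_ge_if_reset_once:
  assumes q: "emeasure M {s. snd s < fst s} < 1"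
    and once: "\<And>t. 0 \<le> t \<Longrightarrow> emeasure T {ennreal t<..} \<le> emeasure (reset_once T R) {ennreal t<..}"
    and t: "0 \<le> t"
  shows "emeasure T {ennreal t<..} \<le> emeasure (reset_full T R) {ennreal t<..}"
proof (rule le_if_slack_contracts[OF _ q _ t])
  fix d and u :: real
  assume slack: "\<And>u. 0 \<le> u \<Longrightarrow> emeasure T {ennreal u<..} \<le> emeasure (reset_full T R) {ennreal u<..} + d"
    and u: "0 \<le> u"
  have "emeasure T {ennreal u<..} \<le> emeasure (reset_once T R) {ennreal u<..}" by (rule once[OF u])
  also have "\<dots> = (\<integral>\<^sup>+ s. first_step T {ennreal u<..} s \<partial>M)"
    by (simp add: emeasure_reset_once_first_step)
  also have "\<dots> \<le> (\<integral>\<^sup>+ s. first_step (reset_full T R) {ennreal u<..} s \<partial>M) + d * emeasure M {s. snd s < fst s}"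
    by (rule nn_integral_first_step_tail_le[OF prob_T sets_T prob_space_reset_full sets_reset_full u slack])
  also have "(\<integral>\<^sup>+ s. first_step (reset_full T R) {ennreal u<..} s \<partial>M) = emeasure (reset_full T R) {ennreal u<..}"
    by (simp add: emeasure_reset_full_renewal)
  finally show "emeasure T {ennreal u<..} \<le> emeasure (reset_full T R) {ennreal u<..} + d * emeasure M {s. snd s < fst s}" .
qed (rule prob_space.emeasure_le_1[OF prob_T])

lemma emeasure_reset_once_tail:
  assumes t: "0 \<le> t"
  shows "emeasure (reset_once T R) {ennreal t<..} = (\<integral>\<^sup>+ r. (if ennreal t < r then ennreal (tail T t)
      else ennreal (tail T (enn2real r) * tail T (t - enn2real r))) \<partial>R)"
proof -
  interpret P: pair_sigma_finite T R
    using prob_T prob_R by (simp add: pair_sigma_finite_def prob_space_imp_sigma_finite)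
  have "emeasure (reset_once T R) {ennreal t<..} = (\<integral>\<^sup>+ r. (\<integral>\<^sup>+ t1. first_step T {ennreal t<..} (t1, r) \<partial>T) \<partial>R)"
    unfolding emeasure_reset_once_first_step[OF borel_open[OF open_greaterThan]]
    by (rule P.nn_integral_snd[symmetric]) (rule borel_measurable_first_step[OF prob_T sets_T], simp)
  then show ?thesis by (simp add: nn_integral_first_step_fixed_reset[OF prob_T sets_T prob_T sets_T t])
qed

lemma reset_once_tail_le_if_supermultiplicative:
  assumes "supermultiplicative (tail T)" and t: "0 \<le> t"
  shows "emeasure (reset_once T R) {ennreal t<..} \<le> emeasure T {ennreal t<..}"
proof -
  have "emeasure (reset_once T R) {ennreal t<..} \<le> (\<integral>\<^sup>+ r. ennreal (tail T t) \<partial>R)"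
    unfolding emeasure_reset_once_tail[OF t]
  proof (intro nn_integral_mono, split if_split, intro conjI impI)
    fix r assume "\<not> ennreal t < r"
    then have "enn2real r \<le> t" using enn2real_mono[of r "ennreal t"] t by simp
    then show "ennreal (tail T (enn2real r) * tail T (t - enn2real r)) \<le> ennreal (tail T t)"
      using assms(1) unfolding supermultiplicative_def
      by (metis add.commute diff_add_cancel diff_ge_0_iff_ge enn2real_nonneg ennreal_leI)
  qed simp
  also have "\<dots> = emeasure T {ennreal t<..}"
    using emeasure_Ioi_eq_tail[OF prob_T] prob_space.emeasure_space_1[OF prob_R] by simp
  finally show ?thesis .
qed

lemma reset_once_tail_ge_if_submultiplicative:
  assumes "submultiplicative (tail T)" and t: "0 \<le> t"
  shows "emeasure T {ennreal t<..} \<le> emeasure (reset_once T R) {ennreal t<..}"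
proof -
  have "emeasure T {ennreal t<..} = (\<integral>\<^sup>+ r. ennreal (tail T t) \<partial>R)"
    using emeasure_Ioi_eq_tail[OF prob_T] prob_space.emeasure_space_1[OF prob_R] by simp
  also have "\<dots> \<le> emeasure (reset_once T R) {ennreal t<..}"
    unfolding emeasure_reset_once_tail[OF t]
  proof (intro nn_integral_mono, split if_split, intro conjI impI)
    fix r assume "\<not> ennreal t < r"
    then have "enn2real r \<le> t" using enn2real_mono[of r "ennreal t"] t by simp
    then show "ennreal (tail T t) \<le> ennreal (tail T (enn2real r) * tail T (t - enn2real r))"
      using assms(1) unfolding submultiplicative_def
      by (metis add.commute diff_add_cancel diff_ge_0_iff_ge enn2real_nonneg ennreal_leI)
  qed simp
  finally show ?thesis .
qed

end

section \<open>Resets at a constant time\<close>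

lemma prob_space_dirac_law: "prob_space (dirac_law r)"
  and sets_dirac_law: "sets (dirac_law r) = sets borel"
  unfolding dirac_law_def by (auto intro!: prob_space_return)

lemma reset_law_dirac_law: "0 < r \<Longrightarrow> reset_law (dirac_law r)"
  unfolding reset_law_def using prob_space_dirac_law[of r] sets_dirac_law[of r]
  by (auto simp: dirac_law_def emeasure_return)

lemma reset_pair_dirac_law: "prob_space T \<Longrightarrow> sets T = sets borel \<Longrightarrow> reset_pair T (dirac_law r)"
  by (simp add: reset_pair_def prob_space_dirac_law sets_dirac_law)

lemma nn_integral_pair_dirac_law:
  assumes T: "prob_space T" and f: "f \<in> borel_measurable (T \<Otimes>\<^sub>M dirac_law r)"
  shows "(\<integral>\<^sup>+ s. f s \<partial>(T \<Otimes>\<^sub>M dirac_law r)) = (\<integral>\<^sup>+ t1. f (t1, ennreal r) \<partial>T)"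
proof -
  interpret D: prob_space "dirac_law r" by (rule prob_space_dirac_law)
  have "(\<integral>\<^sup>+ s. f s \<partial>(T \<Otimes>\<^sub>M dirac_law r)) = (\<integral>\<^sup>+ t1. (\<integral>\<^sup>+ y. f (t1, y) \<partial>dirac_law r) \<partial>T)"
    by (rule D.nn_integral_fst[symmetric]) (rule f)
  also have "\<dots> = (\<integral>\<^sup>+ t1. f (t1, ennreal r) \<partial>T)"
  proof (rule nn_integral_cong)
    fix t1 assume "t1 \<in> space T"
    then have "(\<lambda>y. f (t1, y)) \<in> borel_measurable borel"
      using measurable_Pair2[OF f] by (simp add: dirac_law_def)
    then show "(\<integral>\<^sup>+ y. f (t1, y) \<partial>dirac_law r) = f (t1, ennreal r)"
      by (simp add: dirac_law_def nn_integral_return)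
  qed
  finally show ?thesis .
qed

lemma tail_reset_once_dirac_law:
  assumes T: "prob_space T" "sets T = sets borel" and t: "0 \<le> t" and \<rho>: "0 \<le> \<rho>"
  shows "tail (reset_once T (dirac_law \<rho>)) t = (if t < \<rho> then tail T t else tail T \<rho> * tail T (t - \<rho>))"
proof -
  interpret reset_pair T "dirac_law \<rho>" by (rule reset_pair_dirac_law[OF T])
  have "emeasure (reset_once T (dirac_law \<rho>)) {ennreal t<..} = (\<integral>\<^sup>+ s. first_step T {ennreal t<..} s \<partial>M)"
    by (simp add: emeasure_reset_once_first_step)
  also have "\<dots> = (\<integral>\<^sup>+ t1. first_step T {ennreal t<..} (t1, ennreal \<rho>) \<partial>T)"
    by (rule nn_integral_pair_dirac_law[OF T(1)]) (rule borel_measurable_first_step[OF T], simp)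
  finally show ?thesis
    using t \<rho> by (auto simp: nn_integral_first_step_fixed_reset[OF T T t] ennreal_less_iff tail_nonneg
        emeasure_Ioi_eq_tail[OF prob_space_reset_once])
qed

lemma tail_reset_full_dirac_law:
  assumes T: "prob_space T" "sets T = sets borel" and t: "0 \<le> t" and \<rho>: "0 \<le> \<rho>"
  shows "tail (reset_full T (dirac_law \<rho>)) t =
    (if t < \<rho> then tail T t else tail T \<rho> * tail (reset_full T (dirac_law \<rho>)) (t - \<rho>))"
proof -
  interpret reset_pair T "dirac_law \<rho>" by (rule reset_pair_dirac_law[OF T])
  let ?G = "reset_full T (dirac_law \<rho>)"
  have "emeasure ?G {ennreal t<..} = (\<integral>\<^sup>+ s. first_step ?G {ennreal t<..} s \<partial>M)"
    by (simp add: emeasure_reset_full_renewal)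
  also have "\<dots> = (\<integral>\<^sup>+ t1. first_step ?G {ennreal t<..} (t1, ennreal \<rho>) \<partial>T)"
    by (rule nn_integral_pair_dirac_law[OF T(1)])
       (rule borel_measurable_first_step[OF prob_space_reset_full sets_reset_full], simp)
  finally show ?thesis
    using t \<rho> by (auto simp: nn_integral_first_step_fixed_reset[OF T prob_space_reset_full sets_reset_full t]
        ennreal_less_iff tail_nonneg emeasure_Ioi_eq_tail[OF prob_space_reset_full])
qed

text \<open>Up to time \<open>2 \<rho>\<close>, restarting at \<open>\<rho>\<close> and restarting once at \<open>\<rho>\<close> give the same law.\<close>

lemma tail_reset_full_dirac_law_short:
  assumes T: "prob_space T" "sets T = sets borel" and "0 \<le> u" "u < \<rho>"
  shows "tail (reset_full T (dirac_law \<rho>)) (\<rho> + u) = tail T \<rho> * tail T u"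
  using assms tail_reset_full_dirac_law[OF T, of "\<rho> + u" \<rho>] tail_reset_full_dirac_law[OF T, of u \<rho>]
  by simp

text \<open>For the tail of a law it suffices to compare \<open>F(\<rho> + u)\<close> with \<open>F(\<rho>) F(u)\<close> for \<open>u < \<rho>\<close>:
  the general case follows by approaching from the right.\<close>

lemma supermultiplicative_tailI:
  assumes T: "prob_space T" "sets T = sets borel"
    and short: "\<And>\<rho> u. 0 < \<rho> \<Longrightarrow> 0 \<le> u \<Longrightarrow> u < \<rho> \<Longrightarrow> tail T \<rho> * tail T u \<le> tail T (\<rho> + u)"
  shows "supermultiplicative (tail T)"
proof (rule supermultiplicativeI_ordered)
  fix x y :: real assume x: "0 \<le> x" and xy: "x \<le> y"
  show "tail T x * tail T y \<le> tail T (x + y)"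
  proof (cases "tail T x = 0")
    case False
    then have pos: "0 < tail T x" using tail_nonneg[of T x] by simp
    have "tail T y \<le> tail T (x + y) / tail T x"
    proof (rule tail_le_if_right_approx[OF T])
      show "0 \<le> y" using x xy by simp
      fix n :: nat
      let ?e = "inverse (real (Suc n))"
      have e: "0 < ?e" by simp
      have "tail T (y + ?e) * tail T x \<le> tail T (y + ?e + x)"
        by (rule short) (use x xy e in linarith)+
      also have "\<dots> \<le> tail T (x + y)"
        by (rule tail_antimono[OF T]) (use x xy in auto)
      finally show "tail T (y + ?e) \<le> tail T (x + y) / tail T x"
        using pos by (simp add: field_simps)
    qed
    then show ?thesis using pos by (simp add: field_simps)
  qed (simp add: tail_nonneg)
qed

lemma submultiplicative_tailI:
  assumes T: "prob_space T" "sets T = sets borel"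
    and short: "\<And>\<rho> u. 0 < \<rho> \<Longrightarrow> 0 \<le> u \<Longrightarrow> u < \<rho> \<Longrightarrow> tail T (\<rho> + u) \<le> tail T \<rho> * tail T u"
  shows "submultiplicative (tail T)"
proof (rule submultiplicativeI_ordered)
  fix x y :: real assume x: "0 \<le> x" and xy: "x \<le> y"
  show "tail T (x + y) \<le> tail T x * tail T y"
  proof (rule tail_le_if_right_approx[OF T])
    show "0 \<le> x + y" using x xy by simp
    fix n :: nat
    let ?e = "inverse (real (Suc n))"
    have e: "0 < ?e" by simp
    have "tail T (x + y + ?e) = tail T ((y + ?e) + x)" by (simp add: ac_simps)
    also have "\<dots> \<le> tail T (y + ?e) * tail T x"
      by (rule short) (use x xy e in linarith)+
    also have "\<dots> \<le> tail T y * tail T x"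
      by (intro mult_right_mono tail_antimono[OF T] tail_nonneg) (use x xy in auto)
    finally show "tail T (x + y + ?e) \<le> tail T x * tail T y" by (simp add: ac_simps)
  qed
qed

lemma conditional_shift_set_eq:
  assumes "0 \<le> r" "0 \<le> t"
  shows "{s. s - ennreal r > ennreal t} \<inter> {ennreal r<..} = {ennreal (r + t)<..}"
proof (intro set_eqI)
  fix s :: ennreal
  show "s \<in> {s. s - ennreal r > ennreal t} \<inter> {ennreal r<..} \<longleftrightarrow> s \<in> {ennreal (r + t)<..}"
    by (cases s rule: ennreal_cases)
       (use assms in \<open>auto simp: ennreal_minus ennreal_less_iff ennreal_minus_top simp del: ennreal_plus\<close>)
qed

lemma neglog_subadditive_iff:
  fixes a b c :: real
  assumes "0 \<le> a" "0 \<le> b" "0 \<le> c"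
  shows "(if c = 0 then \<infinity> else ereal (- ln c))
      \<le> (if a = 0 then \<infinity> else ereal (- ln a)) + (if b = 0 then \<infinity> else ereal (- ln b))
    \<longleftrightarrow> a * b \<le> c"
proof (cases "a = 0 \<or> b = 0 \<or> c = 0")
  case True
  then show ?thesis using assms by (auto simp: not_le mult_pos_pos)
next
  case False
  then have "0 < a" "0 < b" "0 < c" using assms by auto
  then have "- ln c \<le> - ln a + - ln b \<longleftrightarrow> ln (a * b) \<le> ln c" by (simp add: ln_mult) arith
  then show ?thesis using \<open>0 < a\<close> \<open>0 < b\<close> \<open>0 < c\<close> by simp
qed

lemma neglog_superadditive_iff:
  fixes a b c :: real
  assumes "0 \<le> a" "0 \<le> b" "0 \<le> c" "c \<le> a" "c \<le> b"
  shows "(if c = 0 then \<infinity> else ereal (- ln c))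
      \<ge> (if a = 0 then \<infinity> else ereal (- ln a)) + (if b = 0 then \<infinity> else ereal (- ln b))
    \<longleftrightarrow> c \<le> a * b"
proof (cases "c = 0")
  case False
  then have "0 < a" "0 < b" "0 < c" using assms by auto
  then have "- ln c \<ge> - ln a + - ln b \<longleftrightarrow> ln c \<le> ln (a * b)" by (simp add: ln_mult) arith
  then show ?thesis using \<open>0 < a\<close> \<open>0 < b\<close> \<open>0 < c\<close> by simp
qed (use assms in simp)

section \<open>Multiplicative tails\<close>

lemma additive_nonneg_of_nat_mult:
  fixes g :: "real \<Rightarrow> real"
  assumes add: "\<And>x y. 0 \<le> x \<Longrightarrow> 0 \<le> y \<Longrightarrow> g (x + y) = g x + g y" and x: "0 \<le> x"
  shows "g (real n * x) = real n * g x"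
proof (induction n)
  case 0
  show ?case using add[of 0 0] by simp
next
  case (Suc n)
  have "g (real (Suc n) * x) = g (real n * x) + g x"
    using add[of "real n * x" x] x by (simp add: algebra_simps)
  then show ?case using Suc by (simp add: algebra_simps)
qed

lemma additive_monotone_approx:
  fixes g :: "real \<Rightarrow> real"
  assumes add: "\<And>x y. 0 \<le> x \<Longrightarrow> 0 \<le> y \<Longrightarrow> g (x + y) = g x + g y"
    and mono: "\<And>x y. 0 \<le> x \<Longrightarrow> x \<le> y \<Longrightarrow> g x \<le> g y"
    and x: "0 \<le> x"
  shows "\<bar>g x - g 1 * x\<bar> \<le> g 1 / real (Suc m)"
proof -
  let ?N = "real (Suc m)" and ?c = "g 1"
  have "g 0 = 0" using additive_nonneg_of_nat_mult[OF add, of 0 0] by simp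
  then have c0: "0 \<le> ?c" using mono[of 0 1] by simp
  have grid: "g (real k / ?N) = real k * ?c / ?N" for k
  proof -
    have "?c = ?N * g (1 / ?N)"
      using additive_nonneg_of_nat_mult[OF add, of "1 / ?N" "Suc m"] by simp
    then show ?thesis
      using additive_nonneg_of_nat_mult[OF add, of "1 / ?N" k] by (simp add: field_simps)
  qed
  define k where "k = nat \<lfloor>?N * x\<rfloor>"
  have lo: "real k / ?N \<le> x" and hi: "x \<le> real (Suc k) / ?N"
    unfolding k_def using x by (simp_all add: field_simps of_nat_nat) linarith
  have "real k * ?c / ?N \<le> g x" using mono[OF _ lo] grid[of k] by simp
  moreover have "g x \<le> real (Suc k) * ?c / ?N" using mono[OF x hi] grid[of "Suc k"] by simp
  moreover have "real k * ?c / ?N \<le> ?c * x" using mult_left_mono[OF lo c0] by (simp add: field_simps)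
  moreover have "?c * x \<le> real (Suc k) * ?c / ?N" using mult_left_mono[OF hi c0] by (simp add: field_simps)
  moreover have "real (Suc k) * ?c / ?N = real k * ?c / ?N + ?c / ?N"
    by (simp only: of_nat_Suc distrib_right add_divide_distrib mult_1)
  ultimately show ?thesis by linarith
qed

lemma additive_monotone_linear:
  fixes g :: "real \<Rightarrow> real"
  assumes add: "\<And>x y. 0 \<le> x \<Longrightarrow> 0 \<le> y \<Longrightarrow> g (x + y) = g x + g y"
    and mono: "\<And>x y. 0 \<le> x \<Longrightarrow> x \<le> y \<Longrightarrow> g x \<le> g y"
    and x: "0 \<le> x"
  shows "g x = g 1 * x"
proof (rule ccontr)
  let ?c = "g 1"
  have c0: "0 \<le> ?c" using mono[of 0 1] additive_nonneg_of_nat_mult[OF add, of 0 0] by simp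
  assume "g x \<noteq> ?c * x"
  then have "0 < \<bar>g x - ?c * x\<bar> / (?c + 1)" using c0 by simp
  then obtain m where m: "inverse (real (Suc m)) < \<bar>g x - ?c * x\<bar> / (?c + 1)"
    using reals_Archimedean by blast
  have "?c / real (Suc m) \<le> (?c + 1) * inverse (real (Suc m))" by (simp add: field_simps)
  also have "\<dots> < \<bar>g x - ?c * x\<bar>" using m c0 by (simp add: field_simps)
  finally show False using additive_monotone_approx[OF add mono x, of m] by simp
qed

lemma prob_space_Exp_law: "0 < l \<Longrightarrow> prob_space (Exp_law l)"
  unfolding Exp_law_def by (intro prob_space.prob_space_distr prob_space_exponential_density) simp_all

lemma sets_Exp_law: "sets (Exp_law l) = sets borel"
  by (simp add: Exp_law_def)

lemma tail_Exp_law: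
  assumes l: "0 < l" and t: "0 \<le> t"
  shows "tail (Exp_law l) t = exp (- l * t)"
proof -
  let ?D = "density lborel (exponential_density l)"
  interpret D: prob_space ?D by (rule prob_space_exponential_density[OF l])
  have preimage: "ennreal -` {ennreal t<..} \<inter> space ?D = UNIV - {..t}"
    using t by (auto simp: ennreal_less_iff)
  have "tail (Exp_law l) t = measure ?D (ennreal -` {ennreal t<..} \<inter> space ?D)"
    unfolding tail_def Exp_law_def by (rule measure_distr) auto
  also have "\<dots> = 1 - measure ?D {..t}"
    unfolding preimage using D.prob_compl[of "{..t}"] by simp
  also have "measure ?D {..t} = 1 - exp (- l * t)"
    unfolding measure_def using emeasure_erlang_density[OF l, of 0 t] t l
    by (simp add: erlang_CDF_0 mult_nonneg_nonneg)
  finally show ?thesis by simp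
qed

lemma multiplicative_tail_Exp_law: "0 < l \<Longrightarrow> multiplicative (tail (Exp_law l))"
  unfolding multiplicative_def
proof (intro allI impI)
  fix x y :: real assume "0 < l" "0 \<le> x" "0 \<le> y"
  moreover have "exp (- l * (x + y)) = exp (- l * x) * exp (- l * y)"
    by (simp add: algebra_simps flip: exp_add)
  ultimately show "tail (Exp_law l) (x + y) = tail (Exp_law l) x * tail (Exp_law l) y"
    by (simp add: tail_Exp_law)
qed

lemma all_reset_laws_iff:
  assumes "\<And>R. reset_law R \<Longrightarrow> S \<Longrightarrow> P R" and "\<forall>r>0. P (dirac_law r) \<Longrightarrow> S"
  shows "(\<forall>R. reset_law R \<longrightarrow> P R) \<longleftrightarrow> S" and "(\<forall>r>0. P (dirac_law r)) \<longleftrightarrow> S"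
  using assms reset_law_dirac_law by blast+

locale waiting_time =
  fixes T :: "ennreal measure"
  assumes base: "base_law T"
begin

lemma prob_T: "prob_space T" and sets_T: "sets T = sets borel"
  using base by (auto simp: base_law_def)

lemma reset_pair_if_reset_law: "reset_law R \<Longrightarrow> reset_pair T R"
  by (simp add: reset_pair_def reset_law_def prob_T sets_T)

lemma tail_0_pos: "0 < tail T 0"
  using base emeasure_Ioi_eq_tail[OF prob_T, of 0] by (simp add: base_law_def)

lemma tail_pos_if_supermultiplicative:
  assumes super: "supermultiplicative (tail T)" and r: "0 \<le> r"
  shows "0 < tail T r"
proof -
  obtain n where n: "0 < tail T (0 + inverse (real (Suc n)))"
    using tail_le_if_right_approx[OF prob_T sets_T order_refl, of 0] tail_0_pos by (meson not_le)
  define \<delta> where "\<delta> = inverse (real (Suc n))"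
  have \<delta>: "0 < \<delta>" "0 < tail T \<delta>" using n by (simp_all add: \<delta>_def)
  have multiples: "0 < tail T (real k * \<delta>)" for k
  proof (induction k)
    case (Suc k)
    have "tail T (real k * \<delta>) * tail T \<delta> \<le> tail T (real k * \<delta> + \<delta>)"
      using super \<delta> unfolding supermultiplicative_def by auto
    moreover have "0 < tail T (real k * \<delta>) * tail T \<delta>" using Suc \<delta> by simp
    ultimately show ?case by (simp add: algebra_simps)
  qed (simp add: tail_0_pos)
  obtain k where "r / \<delta> \<le> real k" using real_arch_simple by blast
  then have "tail T (real k * \<delta>) \<le> tail T r"
    using \<delta> r by (intro tail_antimono[OF prob_T sets_T]) (auto simp: field_simps)
  then show ?thesis using multiples[of k] by simp
qed

lemma conditional_tail_iff_supermultiplicative: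
  "(\<forall>r t. r \<ge> 0 \<longrightarrow> t \<ge> 0 \<longrightarrow> measure T {ennreal r<..} > 0 \<and>
      measure T ({s. s - ennreal r > ennreal t} \<inter> {ennreal r<..}) / measure T {ennreal r<..}
        \<ge> measure T {ennreal t<..})
   \<longleftrightarrow> supermultiplicative (tail T)"
proof -
  have "(0 < tail T r \<and> tail T t \<le> tail T (r + t) / tail T r) \<longleftrightarrow>
      0 < tail T r \<and> tail T r * tail T t \<le> tail T (r + t)" for r t
    by (auto simp: pos_le_divide_eq mult.commute)
  then show ?thesis
    unfolding supermultiplicative_def
    using tail_pos_if_supermultiplicative[unfolded supermultiplicative_def]
    by (auto simp: conditional_shift_set_eq tail_def simp del: ennreal_plus)
qed

lemma neglog_tail_iff:
  "(\<forall>x y. x \<ge> 0 \<longrightarrow> y \<ge> 0 \<longrightarrow> neglog_tail T (x + y) \<le> neglog_tail T x + neglog_tail T y)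
    \<longleftrightarrow> supermultiplicative (tail T)"
  "(\<forall>x y. x \<ge> 0 \<longrightarrow> y \<ge> 0 \<longrightarrow> neglog_tail T (x + y) \<ge> neglog_tail T x + neglog_tail T y)
    \<longleftrightarrow> submultiplicative (tail T)"
proof -
  have "neglog_tail T (x + y) \<ge> neglog_tail T x + neglog_tail T y \<longleftrightarrow> tail T (x + y) \<le> tail T x * tail T y"
    if "0 \<le> x" "0 \<le> y" for x y
    unfolding neglog_tail_def using that
    by (intro neglog_superadditive_iff tail_nonneg tail_antimono[OF prob_T sets_T]) auto
  then show "(\<forall>x y. x \<ge> 0 \<longrightarrow> y \<ge> 0 \<longrightarrow> neglog_tail T (x + y) \<ge> neglog_tail T x + neglog_tail T y)
    \<longleftrightarrow> submultiplicative (tail T)"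
    unfolding submultiplicative_def by blast
qed (simp add: supermultiplicative_def neglog_tail_def neglog_subadditive_iff tail_nonneg)

lemma exponential_if_multiplicative:
  assumes mult: "multiplicative (tail T)"
  shows "\<exists>l>0. T = Exp_law l"
proof -
  have pos: "0 < tail T x" if "0 \<le> x" for x
    using mult that by (intro tail_pos_if_supermultiplicative) (simp add: multiplicative_iff)
  define c where "c = - ln (tail T 1)"
  have linear: "- ln (tail T x) = c * x" if "0 \<le> x" for x
    unfolding c_def
  proof (rule additive_monotone_linear[where g = "\<lambda>x. - ln (tail T x)", OF _ _ that])
    show "- ln (tail T (x + y)) = - ln (tail T x) + - ln (tail T y)" if "0 \<le> x" "0 \<le> y" for x y
      using mult that pos[of x] pos[of y] by (simp add: multiplicative_def ln_mult)
    show "- ln (tail T x) \<le> - ln (tail T y)" if "0 \<le> x" "x \<le> y" for x y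
      using that pos tail_antimono[OF prob_T sets_T that] by simp
  qed
  have tail_exp: "tail T x = exp (- c * x)" if "0 \<le> x" for x
    using linear[OF that] pos[OF that] by (metis exp_ln minus_minus mult_minus_left)
  have "0 < c"
  proof (rule ccontr)
    assume "\<not> 0 < c"
    moreover have "0 \<le> c" using linear[of 1] tail_le_1[OF prob_T, of 1] pos[of 1] by (simp add: c_def)
    ultimately have "emeasure T {ennreal 1<..} = 1"
      using tail_exp[of 1] emeasure_Ioi_eq_tail[OF prob_T, of 1] by simp
    then have "emeasure T (space T - {ennreal 1<..}) = 0"
      using prob_space.emeasure_space_1[OF prob_T] by (subst emeasure_compl) (auto simp: sets_T)
    moreover have "emeasure T {..<ennreal 1} \<le> emeasure T (space T - {ennreal 1<..})"
      by (intro emeasure_mono) (auto simp: sets_T space_eq_UNIV_if_sets_borel[OF sets_T])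
    moreover have "0 < emeasure T {..<ennreal 1}" using base by (simp add: base_law_def)
    ultimately show False by simp
  qed
  moreover have "T = Exp_law c"
    by (rule measure_eqI_tail[OF prob_T sets_T prob_space_Exp_law[OF \<open>0 < c\<close>] sets_Exp_law])
       (simp add: tail_exp tail_Exp_law[OF \<open>0 < c\<close>])
  ultimately show ?thesis by blast
qed

lemma multiplicative_iff_Exp_law: "multiplicative (tail T) \<longleftrightarrow> (\<exists>l>0. T = Exp_law l)"
  using exponential_if_multiplicative multiplicative_tail_Exp_law by blast

lemma stoch_le_resets_if_supermultiplicative:
  assumes "reset_law R" "supermultiplicative (tail T)"
  shows "stoch_le (reset_once T R) T" "stoch_le (reset_full T R) T"
proof -
  interpret reset_pair T R by (rule reset_pair_if_reset_law[OF assms(1)])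
  note once = reset_once_tail_le_if_supermultiplicative[OF assms(2)]
  show "stoch_le (reset_once T R) T"
    by (simp add: stoch_le_iff_emeasure prob_space_reset_once prob_T once)
  show "stoch_le (reset_full T R) T"
    using reset_full_tail_le_if_reset_once[OF emeasure_reset_first_less_1[OF base assms(1)] once]
    by (simp add: stoch_le_iff_emeasure prob_space_reset_full prob_T)
qed

lemma stoch_ge_resets_if_submultiplicative:
  assumes "reset_law R" "submultiplicative (tail T)"
  shows "stoch_le T (reset_once T R)" "stoch_le T (reset_full T R)"
proof -
  interpret reset_pair T R by (rule reset_pair_if_reset_law[OF assms(1)])
  note once = reset_once_tail_ge_if_submultiplicative[OF assms(2)]
  show "stoch_le T (reset_once T R)"
    by (simp add: stoch_le_iff_emeasure prob_space_reset_once prob_T once)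
  show "stoch_le T (reset_full T R)"
    using reset_full_tail_ge_if_reset_once[OF emeasure_reset_first_less_1[OF base assms(1)] once]
    by (simp add: stoch_le_iff_emeasure prob_space_reset_full prob_T)
qed

lemma supermultiplicative_if_dirac_full:
  assumes "\<forall>r>0. stoch_le (reset_full T (dirac_law r)) T"
  shows "supermultiplicative (tail T)"
proof (rule supermultiplicative_tailI[OF prob_T sets_T])
  fix \<rho> u :: real assume "0 < \<rho>" "0 \<le> u" "u < \<rho>"
  moreover from this have "tail (reset_full T (dirac_law \<rho>)) (\<rho> + u) \<le> tail T (\<rho> + u)"
    using assms by (simp add: stoch_le_def tail_def del: ennreal_plus)
  ultimately show "tail T \<rho> * tail T u \<le> tail T (\<rho> + u)"
    by (simp add: tail_reset_full_dirac_law_short[OF prob_T sets_T])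
qed

lemma submultiplicative_if_dirac_full:
  assumes "\<forall>r>0. stoch_le T (reset_full T (dirac_law r))"
  shows "submultiplicative (tail T)"
proof (rule submultiplicative_tailI[OF prob_T sets_T])
  fix \<rho> u :: real assume "0 < \<rho>" "0 \<le> u" "u < \<rho>"
  moreover from this have "tail T (\<rho> + u) \<le> tail (reset_full T (dirac_law \<rho>)) (\<rho> + u)"
    using assms by (simp add: stoch_le_def tail_def del: ennreal_plus)
  ultimately show "tail T (\<rho> + u) \<le> tail T \<rho> * tail T u"
    by (simp add: tail_reset_full_dirac_law_short[OF prob_T sets_T])
qed

lemma supermultiplicative_if_dirac_once:
  assumes "\<forall>r>0. stoch_le (reset_once T (dirac_law r)) T"
  shows "supermultiplicative (tail T)"
proof (rule supermultiplicative_tailI[OF prob_T sets_T])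
  fix \<rho> u :: real assume "0 < \<rho>" "0 \<le> u"
  moreover from this have "tail (reset_once T (dirac_law \<rho>)) (\<rho> + u) \<le> tail T (\<rho> + u)"
    using assms by (simp add: stoch_le_def tail_def del: ennreal_plus)
  ultimately show "tail T \<rho> * tail T u \<le> tail T (\<rho> + u)"
    by (simp add: tail_reset_once_dirac_law[OF prob_T sets_T])
qed

lemma submultiplicative_if_dirac_once:
  assumes "\<forall>r>0. stoch_le T (reset_once T (dirac_law r))"
  shows "submultiplicative (tail T)"
proof (rule submultiplicative_tailI[OF prob_T sets_T])
  fix \<rho> u :: real assume "0 < \<rho>" "0 \<le> u"
  moreover from this have "tail T (\<rho> + u) \<le> tail (reset_once T (dirac_law \<rho>)) (\<rho> + u)"
    using assms by (simp add: stoch_le_def tail_def del: ennreal_plus)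
  ultimately show "tail T (\<rho> + u) \<le> tail T \<rho> * tail T u"
    by (simp add: tail_reset_once_dirac_law[OF prob_T sets_T])
qed

lemma stoch_le_reset_iff_supermultiplicative:
  "(\<forall>R. reset_law R \<longrightarrow> stoch_le (reset_full T R) T) \<longleftrightarrow> supermultiplicative (tail T)"
  "(\<forall>r>0. stoch_le (reset_full T (dirac_law r)) T) \<longleftrightarrow> supermultiplicative (tail T)"
  "(\<forall>R. reset_law R \<longrightarrow> stoch_le (reset_once T R) T) \<longleftrightarrow> supermultiplicative (tail T)"
  "(\<forall>r>0. stoch_le (reset_once T (dirac_law r)) T) \<longleftrightarrow> supermultiplicative (tail T)"
  by (rule all_reset_laws_iff;
      use stoch_le_resets_if_supermultiplicative supermultiplicative_if_dirac_full
        supermultiplicative_if_dirac_once in blast)+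

lemma stoch_ge_reset_iff_submultiplicative:
  "(\<forall>R. reset_law R \<longrightarrow> stoch_le T (reset_full T R)) \<longleftrightarrow> submultiplicative (tail T)"
  "(\<forall>r>0. stoch_le T (reset_full T (dirac_law r))) \<longleftrightarrow> submultiplicative (tail T)"
  "(\<forall>R. reset_law R \<longrightarrow> stoch_le T (reset_once T R)) \<longleftrightarrow> submultiplicative (tail T)"
  "(\<forall>r>0. stoch_le T (reset_once T (dirac_law r))) \<longleftrightarrow> submultiplicative (tail T)"
  by (rule all_reset_laws_iff;
      use stoch_ge_resets_if_submultiplicative submultiplicative_if_dirac_full
        submultiplicative_if_dirac_once in blast)+

lemma reset_eq_iff_multiplicative:
  "(\<forall>R. reset_law R \<longrightarrow> reset_full T R = T) \<longleftrightarrow> multiplicative (tail T)"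
  "(\<forall>r>0. reset_full T (dirac_law r) = T) \<longleftrightarrow> multiplicative (tail T)"
  "(\<forall>R. reset_law R \<longrightarrow> reset_once T R = T) \<longleftrightarrow> multiplicative (tail T)"
  "(\<forall>r>0. reset_once T (dirac_law r) = T) \<longleftrightarrow> multiplicative (tail T)"
proof -
  have full: "reset_full T R = T" and once: "reset_once T R = T"
    if "reset_law R" "multiplicative (tail T)" for R
  proof -
    interpret reset_pair T R by (rule reset_pair_if_reset_law[OF that(1)])
    note le = stoch_le_resets_if_supermultiplicative[OF that(1)]
      and ge = stoch_ge_resets_if_submultiplicative[OF that(1)]
    show "reset_full T R = T"
      using that(2) le(2) ge(2) unfolding multiplicative_iff
      by (intro stoch_le_antisym prob_space_reset_full sets_reset_full prob_T sets_T) auto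
    show "reset_once T R = T"
      using that(2) le(1) ge(1) unfolding multiplicative_iff
      by (intro stoch_le_antisym prob_space_reset_once sets_reset_once prob_T sets_T) auto
  qed
  note dirac = supermultiplicative_if_dirac_full submultiplicative_if_dirac_full
    supermultiplicative_if_dirac_once submultiplicative_if_dirac_once
  show "(\<forall>R. reset_law R \<longrightarrow> reset_full T R = T) \<longleftrightarrow> multiplicative (tail T)"
    "(\<forall>r>0. reset_full T (dirac_law r) = T) \<longleftrightarrow> multiplicative (tail T)"
    "(\<forall>R. reset_law R \<longrightarrow> reset_once T R = T) \<longleftrightarrow> multiplicative (tail T)"
    "(\<forall>r>0. reset_once T (dirac_law r) = T) \<longleftrightarrow> multiplicative (tail T)"
    by (rule all_reset_laws_iff;
        use full once dirac in \<open>auto simp: multiplicative_iff stoch_le_refl\<close>)+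
qed

end

theorem proposition2p5:
  fixes T :: "ennreal measure"
  assumes "base_law T"
  shows
   "((\<forall>R. reset_law R \<longrightarrow> stoch_le (reset_full T R) T)
      \<longleftrightarrow> (\<forall>r>0. stoch_le (reset_full T (dirac_law r)) T))
    \<and> ((\<forall>R. reset_law R \<longrightarrow> stoch_le (reset_full T R) T)
      \<longleftrightarrow> (\<forall>x y. x \<ge> 0 \<longrightarrow> y \<ge> 0 \<longrightarrow> tail T (x + y) \<ge> tail T x * tail T y))
    \<and> ((\<forall>R. reset_law R \<longrightarrow> stoch_le (reset_full T R) T)
      \<longleftrightarrow> (\<forall>x y. x \<ge> 0 \<longrightarrow> y \<ge> 0 \<longrightarrow>
             neglog_tail T (x + y) \<le> neglog_tail T x + neglog_tail T y))
    \<and> ((\<forall>R. reset_law R \<longrightarrow> stoch_le (reset_full T R) T)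
      \<longleftrightarrow> (\<forall>r t. r \<ge> 0 \<longrightarrow> t \<ge> 0 \<longrightarrow> measure T {ennreal r<..} > 0 \<and>
             measure T ({s. s - ennreal r > ennreal t} \<inter> {ennreal r<..}) / measure T {ennreal r<..}
               \<ge> measure T {ennreal t<..}))
    \<and> ((\<forall>R. reset_law R \<longrightarrow> stoch_le (reset_full T R) T)
      \<longleftrightarrow> (\<forall>R. reset_law R \<longrightarrow> stoch_le (reset_once T R) T))
    \<and> ((\<forall>R. reset_law R \<longrightarrow> stoch_le (reset_full T R) T)
      \<longleftrightarrow> (\<forall>r>0. stoch_le (reset_once T (dirac_law r)) T))

    \<and> ((\<forall>R. reset_law R \<longrightarrow> stoch_le T (reset_full T R))
      \<longleftrightarrow> (\<forall>r>0. stoch_le T (reset_full T (dirac_law r))))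
    \<and> ((\<forall>R. reset_law R \<longrightarrow> stoch_le T (reset_full T R))
      \<longleftrightarrow> (\<forall>x y. x \<ge> 0 \<longrightarrow> y \<ge> 0 \<longrightarrow> tail T (x + y) \<le> tail T x * tail T y))
    \<and> ((\<forall>R. reset_law R \<longrightarrow> stoch_le T (reset_full T R))
      \<longleftrightarrow> (\<forall>x y. x \<ge> 0 \<longrightarrow> y \<ge> 0 \<longrightarrow>
             neglog_tail T (x + y) \<ge> neglog_tail T x + neglog_tail T y))
    \<and> ((\<forall>R. reset_law R \<longrightarrow> stoch_le T (reset_full T R))
      \<longleftrightarrow> (\<forall>R. reset_law R \<longrightarrow> stoch_le T (reset_once T R)))
    \<and> ((\<forall>R. reset_law R \<longrightarrow> stoch_le T (reset_full T R))
      \<longleftrightarrow> (\<forall>r>0. stoch_le T (reset_once T (dirac_law r))))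

    \<and> ((\<forall>R. reset_law R \<longrightarrow> reset_full T R = T)
      \<longleftrightarrow> (\<forall>r>0. reset_full T (dirac_law r) = T))
    \<and> ((\<forall>R. reset_law R \<longrightarrow> reset_full T R = T)
      \<longleftrightarrow> (\<forall>x y. x \<ge> 0 \<longrightarrow> y \<ge> 0 \<longrightarrow> tail T (x + y) = tail T x * tail T y))
    \<and> ((\<forall>R. reset_law R \<longrightarrow> reset_full T R = T)
      \<longleftrightarrow> (\<forall>R. reset_law R \<longrightarrow> reset_once T R = T))
    \<and> ((\<forall>R. reset_law R \<longrightarrow> reset_full T R = T)
      \<longleftrightarrow> (\<forall>r>0. reset_once T (dirac_law r) = T))

    \<and> ((\<forall>x y. x \<ge> 0 \<longrightarrow> y \<ge> 0 \<longrightarrow> tail T (x + y) = tail T x * tail T y)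
      \<longleftrightarrow> (\<exists>l>0. T = Exp_law l))"
proof -
  interpret waiting_time T by unfold_locales (rule assms)
  note characterisations = stoch_le_reset_iff_supermultiplicative stoch_ge_reset_iff_submultiplicative
    reset_eq_iff_multiplicative neglog_tail_iff conditional_tail_iff_supermultiplicative
  show ?thesis
    using multiplicative_iff_Exp_law
    unfolding characterisations supermultiplicative_def submultiplicative_def multiplicative_def
    by (simp only:)
qed

end
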